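(* Let $A$ and $B=\{b_1,\ldots,b_m\}$ be finite point sets in $\mathbb{R}^2$ with $m\le|A|$, let $t\in\mathbb{R}^2$, and let $\mathcal{L}=\{L_t(b_i)\mid i=1,\ldots,m\}$ be the preference lists at $t$. Let $a_1,\ldots,a_m$ be $m$ distinct points of $A$, and suppose that for some $0\le j\le m-1$: (a) $L_t(b_i)$ starts with $(a_1,a_2,\ldots,a_j)$ for $i=1,\ldots,j$; (b) $L_t(b_{j+1})$ starts with $a_{j+1}$; (c) $L_t(b_i)$ starts with $(a_{j+2},\ldots,a_m)$ for $i=j+2,\ldots,m$. Then every efficient matching for $\mathcal{L}$ matches $B$ onto $\{a_1,\ldots,a_m\}$.
   Context: The preference list $L_t(b)$ of $b\in B$ is the list of all points of $A$ sorted by increasing distance from $b+t$ (a strict ordering, ties broken in some fixed way). A matching is an injective map $\pi:B\to A$. A matching $\pi$ is better than a distinct matching $\sigma$ if for each $b\in B$ either $\pi(b)=\sigma(b)$ or $\pi(b)$ appears before $\sigma(b)$ in $L_t(b)$. A matching is efficient if no matching is better than it. *)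

theory Defs
  imports "HOL-Analysis.Analysis" "HOL-Library.Sublist"
begin

type_synonym point = "real ^ 2"

definition pref_list :: "point set \<Rightarrow> point \<Rightarrow> point \<Rightarrow> point list \<Rightarrow> bool" where
  "pref_list A t b L \<longleftrightarrow> distinct L \<and> set L = A \<and>
     sorted_wrt (\<lambda>x y. dist x (b + t) \<le> dist y (b + t)) L"

definition before :: "point list \<Rightarrow> point \<Rightarrow> point \<Rightarrow> bool" where
  "before L x y \<longleftrightarrow> (\<exists>i k. i < k \<and> k < length L \<and> L ! i = x \<and> L ! k = y)"

definition matching :: "point set \<Rightarrow> point set \<Rightarrow> (point \<Rightarrow> point) \<Rightarrow> bool" where
  "matching A B \<pi> \<longleftrightarrow> inj_on \<pi> B \<and> \<pi> ` B \<subseteq> A"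

definition better :: "point set \<Rightarrow> (point \<Rightarrow> point list) \<Rightarrow> (point \<Rightarrow> point) \<Rightarrow> (point \<Rightarrow> point) \<Rightarrow> bool" where
  "better B L \<pi> \<sigma> \<longleftrightarrow> (\<exists>b\<in>B. \<pi> b \<noteq> \<sigma> b) \<and>
     (\<forall>b\<in>B. \<pi> b = \<sigma> b \<or> before (L b) (\<pi> b) (\<sigma> b))"

definition efficient :: "point set \<Rightarrow> point set \<Rightarrow> (point \<Rightarrow> point list) \<Rightarrow> (point \<Rightarrow> point) \<Rightarrow> bool" where
  "efficient A B L \<pi> \<longleftrightarrow> matching A B \<pi> \<and> \<not> (\<exists>\<sigma>. matching A B \<sigma> \<and> better B L \<sigma> \<pi>)"

end

theory Submission
  imports Defs
begin

text \<open>If some point of the common prefix of a group of lists were left unused by an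
  efficient matching, every member of the group would have to be matched inside the prefix
  (otherwise handing it the unused point is an improvement). By injectivity this needs more
  points than the prefix has left, as long as the group is at least as large as the prefix.
  In the situation of the theorem the agents fall into three such groups, which together
  force every a i to be used; counting then gives equality of the images.\<close>

lemma before_if_prefix:
  assumes "prefix p L" "x \<in> set p" "y \<in> set L" "y \<notin> set p"
  shows "before L x y"
proof -
  obtain r where L: "L = p @ r" using assms(1) prefixE by blast
  obtain i where i: "i < length p" "p ! i = x" using assms(2) by (metis in_set_conv_nth)
  obtain k where k: "k < length L" "L ! k = y" using assms(3) by (metis in_set_conv_nth)
  have "\<not> k < length p"
  proof
    assume "k < length p"
    then have "L ! k = p ! k" by (simp add: L nth_append)
    then show False using k assms(4) \<open>k < length p\<close> by (metis nth_mem)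
  qed
  then have "i < k" using i by simp
  moreover have "L ! i = x" using i by (simp add: L nth_append)
  ultimately show ?thesis unfolding before_def using k by blast
qed

lemma efficient_not_before_unused:
  assumes eff: "efficient A B L \<pi>" and b0: "b0 \<in> B"
    and x: "x \<in> A" "x \<notin> \<pi> ` B"
  shows "\<not> before (L b0) x (\<pi> b0)"
proof
  assume pref: "before (L b0) x (\<pi> b0)"
  define \<sigma> where "\<sigma> = \<pi>(b0 := x)"
  have match: "inj_on \<pi> B" "\<pi> ` B \<subseteq> A"
    using eff unfolding efficient_def matching_def by auto
  have "matching A B \<sigma>"
    unfolding matching_def \<sigma>_def using match x
    by (auto simp: inj_on_fun_updI fun_upd_image)
  moreover have "better B L \<sigma> \<pi>"
    unfolding better_def \<sigma>_def using b0 x(2) pref by (auto simp: image_iff)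
  ultimately show False using eff unfolding efficient_def by blast
qed

lemma efficient_covers_common_prefix:
  assumes eff: "efficient A B L \<pi>" and B0: "B0 \<subseteq> B" "finite B0"
    and pre: "\<forall>b\<in>B0. prefix p (L b) \<and> set (L b) = A"
    and card_le: "card (set p) \<le> card B0"
  shows "set p \<subseteq> \<pi> ` B"
proof
  fix x assume xp: "x \<in> set p"
  show "x \<in> \<pi> ` B"
  proof (rule ccontr)
    assume unused: "x \<notin> \<pi> ` B"
    have match: "inj_on \<pi> B" "\<pi> ` B \<subseteq> A"
      using eff unfolding efficient_def matching_def by auto
    have inj: "inj_on \<pi> B0" using match(1) B0(1) by (rule inj_on_subset)
    have "card B0 > 0" using xp card_le B0(2) by (auto simp: card_gt_0_iff)
    then have "B0 \<noteq> {}" by auto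
    then obtain b0 where "b0 \<in> B0" by blast
    then have xA: "x \<in> A" using pre xp set_mono_prefix by fastforce
    have "\<pi> b \<in> set p" if "b \<in> B0" for b
    proof (rule ccontr)
      assume "\<pi> b \<notin> set p"
      moreover have "\<pi> b \<in> set (L b)"
        using match(2) B0(1) pre that by blast
      ultimately have "before (L b) x (\<pi> b)"
        using before_if_prefix[of p "L b" x "\<pi> b"] pre that xp by simp
      then show False using efficient_not_before_unused[OF eff _ xA unused] B0(1) that by blast
    qed
    then have "\<pi> ` B0 \<subseteq> set p - {x}" using unused B0(1) by blast
    then have "card B0 \<le> card (set p) - 1"
      using card_mono[of "set p - {x}" "\<pi> ` B0"] card_image[OF inj] by (simp add: xp)
    then show False using card_le \<open>card B0 > 0\<close> by linarith
  qed
qed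

lemma efficient_covers_indexed_group:
  fixes a b :: "nat \<Rightarrow> point"
  assumes eff: "efficient A (b ` {1..m}) L \<pi>"
    and b_inj: "inj_on b {1..m}" and a_inj: "inj_on a {1..m}"
    and I: "I \<subseteq> {1..m}"
    and pre: "\<forall>i\<in>I. prefix p (L (b i))" and set_p: "set p = a ` I"
    and Lset: "\<forall>i\<in>{1..m}. set (L (b i)) = A"
  shows "a ` I \<subseteq> \<pi> ` b ` {1..m}"
proof -
  have "finite I" using I finite_atLeastAtMost by (rule finite_subset)
  have "card (set p) = card (b ` I)"
    unfolding set_p using inj_on_subset[OF a_inj I] inj_on_subset[OF b_inj I]
    by (simp add: card_image)
  moreover have "\<forall>x\<in>b ` I. prefix p (L x) \<and> set (L x) = A" using pre Lset I by auto
  moreover have "b ` I \<subseteq> b ` {1..m}" "finite (b ` I)" using I \<open>finite I\<close> by auto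
  ultimately show ?thesis
    using efficient_covers_common_prefix[OF eff, of "b ` I" p] set_p by simp
qed

theorem lemma7:
  fixes A :: "point set" and b a :: "nat \<Rightarrow> point" and m j :: nat
    and t :: point and L :: "point \<Rightarrow> point list"
  assumes finA: "finite A"
    and b_inj: "inj_on b {1..m}"
    and m_le: "m \<le> card A"
    and L_pref: "\<forall>x\<in>b ` {1..m}. pref_list A t x (L x)"
    and a_inj: "inj_on a {1..m}"
    and a_in: "a ` {1..m} \<subseteq> A"
    and j_lt: "j < m"
    and ha: "\<forall>i\<in>{1..j}. prefix (map a [1..<j+1]) (L (b i))"
    and hb: "prefix [a (j+1)] (L (b (j+1)))"
    and hc: "\<forall>i\<in>{j+2..m}. prefix (map a [j+2..<m+1]) (L (b i))"
  shows "\<forall>\<pi>. efficient A (b ` {1..m}) L \<pi> \<longrightarrow> \<pi> ` (b ` {1..m}) = a ` {1..m}"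
proof (intro allI impI)
  fix \<pi> assume eff: "efficient A (b ` {1..m}) L \<pi>"
  note cover = efficient_covers_indexed_group[OF eff b_inj a_inj]
  have Lset: "\<forall>i\<in>{1..m}. set (L (b i)) = A" using L_pref unfolding pref_list_def by auto
  have set_low: "set (map a [1..<j+1]) = a ` {1..j}"
    and set_high: "set (map a [j+2..<m+1]) = a ` {j+2..m}"
    by (simp_all add: atLeastLessThanSuc_atLeastAtMost del: upt_Suc)
  have "a ` {1..j} \<subseteq> \<pi> ` b ` {1..m}"
    by (rule cover[OF _ ha set_low Lset]) (use j_lt in auto)
  moreover have "a ` {j+1} \<subseteq> \<pi> ` b ` {1..m}"
    by (rule cover[OF _ _ _ Lset, where p="[a (j+1)]"]) (use hb j_lt in auto)
  moreover have "a ` {j+2..m} \<subseteq> \<pi> ` b ` {1..m}"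
    by (rule cover[OF _ hc set_high Lset]) auto
  moreover have "{1..m} = {1..j} \<union> {j+1} \<union> {j+2..m}" using j_lt by auto
  ultimately have covered: "a ` {1..m} \<subseteq> \<pi> ` b ` {1..m}" by auto
  have "inj_on \<pi> (b ` {1..m})" using eff unfolding efficient_def matching_def by blast
  then have "card (\<pi> ` b ` {1..m}) = card (a ` {1..m})"
    using b_inj a_inj by (simp add: card_image)
  then show "\<pi> ` b ` {1..m} = a ` {1..m}"
    using card_subset_eq[OF _ covered] by (metis finite_atLeastAtMost finite_imageI)
qed

end
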